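(* Let $S$ be a training set of examples $(\mathbf{x},y)$ with $\mathbf{x}\in[-1,1]^d$, $y\in\{1,\dots,k\}$, let $\epsilon>0$, and let $W^\star\in\mathbb{R}^{k\times d}$ be an arbitrary matrix. Run ShareBoost on $S$ for $T=\left\lceil \frac{4}{\epsilon}\|W^\star\|_{\infty,1}^2\right\rceil$ iterations and let $W$ be the output matrix. Then $\|W\|_{\infty,0}\le T$ and $L(W)\le L(W^\star)+\epsilon$.
   Context: For $W\in\mathbb{R}^{k\times d}$, $W_{\cdot,i}$ denotes its $i$-th column; $\|W\|_{\infty,0}=|\{i:\|W_{\cdot,i}\|_\infty>0\}|$ is the number of nonzero columns and $\|W\|_{\infty,1}=\sum_{i=1}^d\|W_{\cdot,i}\|_\infty$. The loss of $W$ on $(\mathbf{x},y)$ is $\ell(W,(\mathbf{x},y))=\ln\sum_{y'\in\{1,\dots,k\}}\exp\big(\mathbf{1}[y'\neq y]-(W\mathbf{x})_y+(W\mathbf{x})_{y'}\big)$, and $L(W)=\frac1{|S|}\sum_{(\mathbf{x},y)\in S}\ell(W,(\mathbf{x},y))$. Write $\nabla_r L(W)\in\mathbb{R}^k$ for the $r$-th column of the gradient matrix $\nabla L(W)$. The ShareBoost algorithm: initialize $W=0$, $I=\emptyset$; for $t=1,\dots,T$: choose $r\in\{1,\dots,d\}$ maximizing $\|\nabla_r L(W)\|_1$ (ties broken arbitrarily), set $I\leftarrow I\cup\{r\}$, and set $W\leftarrow\arg\min\{L(V): V\in\mathbb{R}^{k\times d},\ V_{\cdot,i}=0\text{ for all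 }i\notin I\}$ (a minimizer is assumed to be attained at every iteration). *)

theory Defs
  imports "HOL-Analysis.Analysis"
begin

text \<open>Matrices W in R^{k x d} are functions nat => nat => real, entry W j i for row j in {1..k},
column i in {1..d}; entries outside this range are never used.
Examples are pairs (x, y) with x :: nat => real (coordinates 1..d) and y :: nat.
The training set S is a list (duplicates allowed).\<close>

type_synonym mat = "nat \<Rightarrow> nat \<Rightarrow> real"
type_synonym example = "(nat \<Rightarrow> real) \<times> nat"

definition mat_vec :: "nat \<Rightarrow> mat \<Rightarrow> (nat \<Rightarrow> real) \<Rightarrow> nat \<Rightarrow> real" where
  "mat_vec d W x j = (\<Sum>i=1..d. W j i * x i)"

definition loss :: "nat \<Rightarrow> nat \<Rightarrow> mat \<Rightarrow> example \<Rightarrow> real" where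
  "loss k d W e = (case e of (x, y) \<Rightarrow>
     ln (\<Sum>y'=1..k. exp ((if y' \<noteq> y then 1 else 0) - mat_vec d W x y + mat_vec d W x y')))"

definition L :: "example list \<Rightarrow> nat \<Rightarrow> nat \<Rightarrow> mat \<Rightarrow> real" where
  "L S k d W = (\<Sum>e\<leftarrow>S. loss k d W e) / real (length S)"

definition col_inf_norm :: "nat \<Rightarrow> mat \<Rightarrow> nat \<Rightarrow> real" where
  "col_inf_norm k W i = Max ((\<lambda>j. \<bar>W j i\<bar>) ` {1..k})"

definition norm_inf_0 :: "nat \<Rightarrow> nat \<Rightarrow> mat \<Rightarrow> nat" where
  "norm_inf_0 k d W = card {i \<in> {1..d}. col_inf_norm k W i > 0}"

definition norm_inf_1 :: "nat \<Rightarrow> nat \<Rightarrow> mat \<Rightarrow> real" where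
  "norm_inf_1 k d W = (\<Sum>i=1..d. col_inf_norm k W i)"

definition grad_L :: "example list \<Rightarrow> nat \<Rightarrow> nat \<Rightarrow> mat \<Rightarrow> nat \<Rightarrow> nat \<Rightarrow> real" where
  "grad_L S k d W j r =
     deriv (\<lambda>t. L S k d (\<lambda>a b. if a = j \<and> b = r then W a b + t else W a b)) 0"

definition grad_col_l1 :: "example list \<Rightarrow> nat \<Rightarrow> nat \<Rightarrow> mat \<Rightarrow> nat \<Rightarrow> real" where
  "grad_col_l1 S k d W r = (\<Sum>j=1..k. \<bar>grad_L S k d W j r\<bar>)"

definition supported_on :: "nat \<Rightarrow> nat \<Rightarrow> nat set \<Rightarrow> mat \<Rightarrow> bool" where
  "supported_on k d I V \<longleftrightarrow> (\<forall>i\<in>{1..d} - I. \<forall>j\<in>{1..k}. V j i = 0)"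

text \<open>A run of ShareBoost for T iterations: Ws t and Is t are W and I after t iterations,
rs t is the column chosen at iteration t+1. Ties and the choice of minimizer are arbitrary.\<close>
definition shareboost_run ::
  "example list \<Rightarrow> nat \<Rightarrow> nat \<Rightarrow> nat \<Rightarrow> (nat \<Rightarrow> mat) \<Rightarrow> (nat \<Rightarrow> nat set) \<Rightarrow> (nat \<Rightarrow> nat) \<Rightarrow> bool" where
  "shareboost_run S k d T Ws Is rs \<longleftrightarrow>
     Ws 0 = (\<lambda>_ _. 0) \<and> Is 0 = {} \<and>
     (\<forall>t<T.
        rs t \<in> {1..d} \<and>
        (\<forall>r'\<in>{1..d}. grad_col_l1 S k d (Ws t) r' \<le> grad_col_l1 S k d (Ws t) (rs t)) \<and>
        Is (Suc t) = insert (rs t) (Is t) \<and>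
        supported_on k d (Is (Suc t)) (Ws (Suc t)) \<and>
        (\<forall>V. supported_on k d (Is (Suc t)) V \<longrightarrow> L S k d (Ws (Suc t)) \<le> L S k d V))"

end

theory Submission
  imports Defs
begin

(* The multiclass loss of one example is a log-sum-exp of affine functions of W.
   Along a line W + s U its second derivative is a softmax variance, which lies in
   [0, M^2] when every score difference of U is within M of a common centre.  Hence L is
   convex (it lies above its tangent lines) and, for directions with entries bounded by 1
   and data in [-1,1]^d, 1-smooth along single columns. *)

lemma convex_above_tangent:
  fixes g g' g'' :: "real \<Rightarrow> real"
  assumes d1: "\<And>s. DERIV g s :> g' s" and d2: "\<And>s. DERIV g' s :> g'' s"
    and convex: "\<And>s. 0 \<le> g'' s"
  shows "g 0 + g' 0 \<le> g 1"
proof -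
  have g'_mono: "g' 0 \<le> g' s" if "0 \<le> s" for s
    using DERIV_nonneg_imp_nondecreasing[of 0 s g'] that d2 convex by blast
  have "(\<lambda>s. g s - s * g' 0) 0 \<le> (\<lambda>s. g s - s * g' 0) 1"
  proof (rule DERIV_nonneg_imp_nondecreasing[of 0 1])
    fix s :: real assume "0 \<le> s" "s \<le> 1"
    have "DERIV (\<lambda>s. g s - s * g' 0) s :> g' s - 1 * g' 0"
      by (auto intro!: derivative_eq_intros d1)
    then show "\<exists>y. DERIV (\<lambda>s. g s - s * g' 0) s :> y \<and> y \<ge> 0"
      using g'_mono[OF \<open>0 \<le> s\<close>] by auto
  qed auto
  then show ?thesis by simp
qed

lemma smooth_quadratic_upper:
  fixes g g' g'' :: "real \<Rightarrow> real"
  assumes d1: "\<And>s. DERIV g s :> g' s" and d2: "\<And>s. DERIV g' s :> g'' s"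
    and smooth: "\<And>s. g'' s \<le> K" and "0 \<le> s"
  shows "g s \<le> g 0 + s * g' 0 + K * s^2 / 2"
proof -
  have g'_growth: "g' z - g' 0 - K * z \<le> 0" if "0 \<le> z" for z
  proof -
    have "(\<lambda>s. g' s - g' 0 - K * s) z \<le> (\<lambda>s. g' s - g' 0 - K * s) 0"
    proof (rule DERIV_nonpos_imp_nonincreasing[of 0 z])
      fix u :: real
      have "DERIV (\<lambda>s. g' s - g' 0 - K * s) u :> g'' u - K"
        by (auto intro!: derivative_eq_intros d2)
      then show "\<exists>y. DERIV (\<lambda>s. g' s - g' 0 - K * s) u :> y \<and> y \<le> 0"
        using smooth[of u] by auto
    qed (use that in auto)
    then show ?thesis by simp
  qed
  have "(\<lambda>s. g s - g 0 - s * g' 0 - K * s^2 / 2) s \<le> (\<lambda>s. g s - g 0 - s * g' 0 - K * s^2 / 2) 0"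
  proof (rule DERIV_nonpos_imp_nonincreasing[of 0 s])
    fix z :: real assume "0 \<le> z"
    have "DERIV (\<lambda>s. g s - g 0 - s * g' 0 - K * s^2 / 2) z :> g' z - 1 * g' 0 - K * (2 * z) / 2"
      by (auto intro!: derivative_eq_intros d1)
    then show "\<exists>y. DERIV (\<lambda>s. g s - g 0 - s * g' 0 - K * s^2 / 2) z :> y \<and> y \<le> 0"
      using g'_growth[OF \<open>0 \<le> z\<close>] by auto
  qed (use \<open>0 \<le> s\<close> in auto)
  then show ?thesis by simp
qed

(* Mean of B under the softmax distribution with logits A: the slope of
   s |-> ln (sum_j exp (A j + s * B j)) at s = 0. *)
definition softmax_mean :: "'j set \<Rightarrow> ('j \<Rightarrow> real) \<Rightarrow> ('j \<Rightarrow> real) \<Rightarrow> real" where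
  "softmax_mean J A B = (\<Sum>j\<in>J. B j * exp (A j)) / (\<Sum>j\<in>J. exp (A j))"

(* Variance of B under the softmax distribution with logits A: the corresponding
   second derivative. *)
definition softmax_var :: "'j set \<Rightarrow> ('j \<Rightarrow> real) \<Rightarrow> ('j \<Rightarrow> real) \<Rightarrow> real" where
  "softmax_var J A B = softmax_mean J A (\<lambda>j. (B j)^2) - (softmax_mean J A B)^2"

lemma softmax_partition_pos:
  "finite J \<Longrightarrow> J \<noteq> {} \<Longrightarrow> 0 < (\<Sum>j\<in>J. exp (A j :: real))"
  by (intro sum_pos) auto

lemma softmax_mean_affine:
  assumes "finite J" "J \<noteq> {}"
  shows "softmax_mean J A (\<lambda>j. a * B j + C j) = a * softmax_mean J A B + softmax_mean J A C"
  using softmax_partition_pos[OF assms, of A]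
  unfolding softmax_mean_def
  by (simp add: distrib_right sum.distrib sum_distrib_left add_divide_distrib mult.assoc)

lemma softmax_mean_const:
  assumes "finite J" "J \<noteq> {}"
  shows "softmax_mean J A (\<lambda>_. c) = c"
  using softmax_partition_pos[OF assms, of A]
  unfolding softmax_mean_def by (simp add: sum_distrib_left[symmetric])

lemma softmax_mean_shift:
  assumes "finite J" "J \<noteq> {}"
  shows "softmax_mean J A (\<lambda>j. B j + c) = softmax_mean J A B + c"
  using softmax_mean_affine[OF assms, of A 1 B "\<lambda>_. c"] softmax_mean_const[OF assms] by simp

lemma softmax_mean_mono:
  assumes "finite J" "J \<noteq> {}" "\<And>j. j \<in> J \<Longrightarrow> B j \<le> C j"
  shows "softmax_mean J A B \<le> softmax_mean J A C"
  using softmax_partition_pos[OF assms(1,2), of A] assms(3)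
  unfolding softmax_mean_def
  by (intro divide_right_mono sum_mono mult_right_mono) auto

lemma softmax_var_central:
  assumes "finite J" "J \<noteq> {}"
  shows "softmax_var J A B = softmax_mean J A (\<lambda>j. (B j - softmax_mean J A B)^2)"
proof -
  define m where "m = softmax_mean J A B"
  have "softmax_mean J A (\<lambda>j. (B j - m)^2)
      = softmax_mean J A (\<lambda>j. (- 2 * m) * B j + ((B j)^2 + m^2))"
    by (rule arg_cong[where f = "softmax_mean J A"]) (auto simp: power2_eq_square algebra_simps)
  also have "\<dots> = - 2 * m * m + softmax_mean J A (\<lambda>j. (B j)^2) + m^2"
    using softmax_mean_affine[OF assms, of A "- 2 * m" B] softmax_mean_affine[OF assms, of A 1]
      softmax_mean_const[OF assms] by (simp add: m_def)
  finally show ?thesis unfolding softmax_var_def m_def[symmetric] by (simp add: power2_eq_square)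
qed

lemma softmax_var_nonneg:
  assumes "finite J" "J \<noteq> {}"
  shows "0 \<le> softmax_var J A B"
  using softmax_mean_mono[OF assms, of "\<lambda>_. 0" "\<lambda>j. (B j - softmax_mean J A B)^2" A]
  unfolding softmax_var_central[OF assms] softmax_mean_const[OF assms] by simp

lemma softmax_var_shift:
  assumes "finite J" "J \<noteq> {}"
  shows "softmax_var J A (\<lambda>j. B j + c) = softmax_var J A B"
  unfolding softmax_var_central[OF assms] softmax_mean_shift[OF assms] by simp

lemma softmax_var_le:
  assumes "finite J" "J \<noteq> {}" and bound: "\<And>j. j \<in> J \<Longrightarrow> \<bar>B j + c\<bar> \<le> M"
  shows "softmax_var J A B \<le> M^2"
proof -
  have "softmax_var J A B = softmax_var J A (\<lambda>j. B j + c)"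
    by (rule softmax_var_shift[OF assms(1,2), symmetric])
  also have "\<dots> \<le> softmax_mean J A (\<lambda>j. (B j + c)^2)"
    unfolding softmax_var_def by simp
  also have "\<dots> \<le> softmax_mean J A (\<lambda>_. M^2)"
    using bound by (intro softmax_mean_mono[OF assms(1,2)]) (metis abs_ge_zero power2_abs power_mono)
  also have "\<dots> = M^2" by (rule softmax_mean_const[OF assms(1,2)])
  finally show ?thesis .
qed

lemma lse_line_deriv:
  assumes "finite J" "J \<noteq> {}"
  shows "DERIV (\<lambda>s. ln (\<Sum>j\<in>J. exp (A j + s * B j))) s :> softmax_mean J (\<lambda>j. A j + s * B j) B"
  using softmax_partition_pos[OF assms, of "\<lambda>j. A j + s * B j"] unfolding softmax_mean_def
  by (auto intro!: derivative_eq_intros sum.cong simp: field_simps)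

lemma softmax_mean_line_deriv:
  assumes "finite J" "J \<noteq> {}"
  shows "DERIV (\<lambda>s. softmax_mean J (\<lambda>j. A j + s * B j) B) s :> softmax_var J (\<lambda>j. A j + s * B j) B"
  using softmax_partition_pos[OF assms, of "\<lambda>j. A j + s * B j"]
  unfolding softmax_var_def softmax_mean_def
  by (auto intro!: derivative_eq_intros sum.cong simp: field_simps power2_eq_square)

lemma lse_tangent:
  assumes "finite J" "J \<noteq> {}"
  shows "ln (\<Sum>j\<in>J. exp (A j)) + softmax_mean J A B \<le> ln (\<Sum>j\<in>J. exp (A j + B j))"
  using convex_above_tangent[OF lse_line_deriv[OF assms] softmax_mean_line_deriv[OF assms]
      softmax_var_nonneg[OF assms]]
  by simp

lemma lse_quadratic_upper:
  assumes "finite J" "J \<noteq> {}" and "\<And>j. j \<in> J \<Longrightarrow> \<bar>B j + c\<bar> \<le> M" and "0 \<le> s"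
  shows "ln (\<Sum>j\<in>J. exp (A j + s * B j))
           \<le> ln (\<Sum>j\<in>J. exp (A j)) + s * softmax_mean J A B + M^2 * s^2 / 2"
  using smooth_quadratic_upper[OF lse_line_deriv[OF assms(1,2)] softmax_mean_line_deriv[OF assms(1,2)]
      softmax_var_le[OF assms(1-3)] assms(4)]
  by simp

definition mat_line :: "mat \<Rightarrow> real \<Rightarrow> mat \<Rightarrow> mat" where
  "mat_line W s U = (\<lambda>a b. W a b + s * U a b)"

definition score_gap :: "nat \<Rightarrow> mat \<Rightarrow> (nat \<Rightarrow> real) \<Rightarrow> nat \<Rightarrow> nat \<Rightarrow> real" where
  "score_gap d W x y j = mat_vec d W x j - mat_vec d W x y"

definition loss_exponent :: "nat \<Rightarrow> mat \<Rightarrow> (nat \<Rightarrow> real) \<Rightarrow> nat \<Rightarrow> nat \<Rightarrow> real" where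
  "loss_exponent d W x y j = (if j \<noteq> y then 1 else 0) + score_gap d W x y j"

definition dloss :: "nat \<Rightarrow> nat \<Rightarrow> mat \<Rightarrow> mat \<Rightarrow> example \<Rightarrow> real" where
  "dloss k d W U e = (case e of (x, y) \<Rightarrow> softmax_mean {1..k} (loss_exponent d W x y) (score_gap d U x y))"

definition DL :: "example list \<Rightarrow> nat \<Rightarrow> nat \<Rightarrow> mat \<Rightarrow> mat \<Rightarrow> real" where
  "DL S k d W U = (\<Sum>e\<leftarrow>S. dloss k d W U e) / real (length S)"

lemma mat_line_0 [simp]: "mat_line W 0 U = W"
  unfolding mat_line_def by simp

lemma loss_exponent_line:
  "loss_exponent d (mat_line W s U) x y j = loss_exponent d W x y j + s * score_gap d U x y j"
  unfolding loss_exponent_def score_gap_def mat_vec_def mat_line_def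
  by (simp add: algebra_simps sum.distrib sum_distrib_left)

lemma loss_as_lse: "loss k d W (x, y) = ln (\<Sum>j=1..k. exp (loss_exponent d W x y j))"
  unfolding loss_def loss_exponent_def score_gap_def by (simp add: algebra_simps)

lemma loss_line:
  "loss k d (mat_line W s U) (x, y) = ln (\<Sum>j=1..k. exp (loss_exponent d W x y j + s * score_gap d U x y j))"
  unfolding loss_as_lse loss_exponent_line ..

lemma loss_tangent:
  assumes "k \<ge> 1"
  shows "loss k d W e + dloss k d W U e \<le> loss k d (mat_line W 1 U) e"
  using lse_tangent[of "{1..k}"] assms loss_line[of k d W 0] loss_line[of k d W 1]
  by (cases e) (simp add: dloss_def)

lemma loss_quadratic_upper:
  assumes "k \<ge> 1" "0 \<le> s" and bound: "\<And>j. j \<in> {1..k} \<Longrightarrow> \<bar>mat_vec d U x j\<bar> \<le> M"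
  shows "loss k d (mat_line W s U) (x, y) \<le> loss k d W (x, y) + s * dloss k d W U (x, y) + M^2 * s^2 / 2"
proof -
  have "\<bar>score_gap d U x y j + mat_vec d U x y\<bar> \<le> M" if "j \<in> {1..k}" for j
    using bound[OF that] by (simp add: score_gap_def)
  then show ?thesis
    using lse_quadratic_upper[of "{1..k}" "score_gap d U x y" "mat_vec d U x y" M s
        "loss_exponent d W x y"] assms(1,2)
    unfolding loss_line by (simp add: dloss_def loss_as_lse)
qed

lemma loss_line_deriv:
  assumes "k \<ge> 1"
  shows "DERIV (\<lambda>s. loss k d (mat_line W s U) e) 0 :> dloss k d W U e"
proof (cases e)
  case (Pair x y)
  show ?thesis
    using lse_line_deriv[of "{1..k}" "loss_exponent d W x y" "score_gap d U x y" 0] assms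
    by (simp add: Pair loss_line dloss_def)
qed

lemma average_mono:
  fixes f g :: "'e \<Rightarrow> real"
  assumes "\<And>e. e \<in> set S \<Longrightarrow> f e \<le> g e"
  shows "(\<Sum>e\<leftarrow>S. f e) / real (length S) \<le> (\<Sum>e\<leftarrow>S. g e) / real (length S)"
  using assms by (intro divide_right_mono sum_list_mono) auto

lemma L_tangent:
  assumes "k \<ge> 1"
  shows "L S k d W + DL S k d W U \<le> L S k d (mat_line W 1 U)"
  using average_mono[of S "\<lambda>e. loss k d W e + dloss k d W U e"] loss_tangent[OF assms]
  unfolding L_def DL_def by (simp add: sum_list_addf add_divide_distrib)

lemma L_quadratic_upper:
  assumes "k \<ge> 1" "0 \<le> s"
    and bound: "\<And>x y j. (x, y) \<in> set S \<Longrightarrow> j \<in> {1..k} \<Longrightarrow> \<bar>mat_vec d U x j\<bar> \<le> M"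
  shows "L S k d (mat_line W s U) \<le> L S k d W + s * DL S k d W U + M^2 * s^2 / 2"
proof (cases "S = []")
  case True then show ?thesis by (simp add: L_def DL_def)
next
  case False
  have "L S k d (mat_line W s U)
      \<le> (\<Sum>e\<leftarrow>S. loss k d W e + s * dloss k d W U e + M^2 * s^2 / 2) / real (length S)"
    unfolding L_def
    using loss_quadratic_upper[OF assms(1,2)] bound by (intro average_mono) auto
  also have "\<dots> = L S k d W + s * DL S k d W U + M^2 * s^2 / 2"
    using False unfolding L_def DL_def
    by (simp add: sum_list_addf sum_list_const_mult sum_list_triv add_divide_distrib)
  finally show ?thesis .
qed

lemma L_line_deriv:
  assumes "k \<ge> 1"
  shows "DERIV (\<lambda>s. L S k d (mat_line W s U)) 0 :> DL S k d W U"
proof -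
  have "DERIV (\<lambda>s. \<Sum>e\<leftarrow>S. loss k d (mat_line W s U) e) 0 :> (\<Sum>e\<leftarrow>S. dloss k d W U e)"
    by (induction S) (auto intro!: derivative_eq_intros loss_line_deriv[OF assms])
  then show ?thesis unfolding L_def DL_def by (rule DERIV_cdivide)
qed

definition loss_grad :: "nat \<Rightarrow> nat \<Rightarrow> mat \<Rightarrow> example \<Rightarrow> nat \<Rightarrow> nat \<Rightarrow> real" where
  "loss_grad k d W e j i = (case e of (x, y) \<Rightarrow>
     (exp (loss_exponent d W x y j) / (\<Sum>j'=1..k. exp (loss_exponent d W x y j')) - (if j = y then 1 else 0)) * x i)"

definition L_grad :: "example list \<Rightarrow> nat \<Rightarrow> nat \<Rightarrow> mat \<Rightarrow> nat \<Rightarrow> nat \<Rightarrow> real" where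
  "L_grad S k d W j i = (\<Sum>e\<leftarrow>S. loss_grad k d W e j i) / real (length S)"

lemma dloss_linear:
  assumes y: "y \<in> {1..k}"
  shows "dloss k d W U (x, y) = (\<Sum>j=1..k. \<Sum>i=1..d. U j i * loss_grad k d W (x, y) j i)"
proof -
  define Z where "Z = (\<Sum>j=1..k. exp (loss_exponent d W x y j))"
  define p where "p j = exp (loss_exponent d W x y j) / Z" for j
  define mv where "mv j = mat_vec d U x j" for j
  have ne: "{1..k} \<noteq> {}" using y by auto
  have inner: "(\<Sum>i=1..d. U j i * loss_grad k d W (x, y) j i) = (p j - (if j = y then 1 else 0)) * mv j"
    for j
  proof -
    have "loss_grad k d W (x, y) j i = (p j - (if j = y then 1 else 0)) * x i" for i
      by (simp add: loss_grad_def p_def Z_def)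
    then show ?thesis by (simp add: mv_def mat_vec_def sum_distrib_left mult_ac)
  qed
  have "(\<Sum>j=1..k. \<Sum>i=1..d. U j i * loss_grad k d W (x, y) j i) = (\<Sum>j=1..k. p j * mv j) - mv y"
  proof -
    have "(p j - (if j = y then 1 else 0)) * mv j = p j * mv j - (if j = y then mv j else 0)" for j
      by (simp add: left_diff_distrib)
    then show ?thesis unfolding inner using y by (simp add: sum_subtractf)
  qed
  moreover have "dloss k d W U (x, y) = softmax_mean {1..k} (loss_exponent d W x y) mv - mv y"
    using softmax_mean_shift[of "{1..k}" "loss_exponent d W x y" mv "- mv y"] ne
    by (simp add: dloss_def score_gap_def[abs_def] mv_def)
  moreover have "softmax_mean {1..k} (loss_exponent d W x y) mv = (\<Sum>j=1..k. p j * mv j)"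
    by (simp add: softmax_mean_def p_def Z_def sum_divide_distrib mult_ac)
  ultimately show ?thesis by simp
qed

lemma DL_linear:
  assumes "\<And>x y. (x, y) \<in> set S \<Longrightarrow> y \<in> {1..k}"
  shows "DL S k d W U = (\<Sum>j=1..k. \<Sum>i=1..d. U j i * L_grad S k d W j i)"
proof -
  have "(\<Sum>e\<leftarrow>S. dloss k d W U e) = (\<Sum>e\<leftarrow>S. \<Sum>j=1..k. \<Sum>i=1..d. U j i * loss_grad k d W e j i)"
    using assms dloss_linear by (intro arg_cong[where f = sum_list] map_cong) auto
  also have "\<dots> = (\<Sum>j=1..k. \<Sum>i=1..d. U j i * (\<Sum>e\<leftarrow>S. loss_grad k d W e j i))"
    by (induction S) (simp_all add: sum.distrib distrib_left)
  finally show ?thesis unfolding DL_def L_grad_def by (simp add: sum_divide_distrib)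
qed

(* The entrywise derivative grad_L of the definitions agrees with the closed form,
   as it is DL in the direction of a matrix unit. *)
lemma grad_L_closed_form:
  assumes "k \<ge> 1" "\<And>x y. (x, y) \<in> set S \<Longrightarrow> y \<in> {1..k}" "j \<in> {1..k}" "r \<in> {1..d}"
  shows "grad_L S k d W j r = L_grad S k d W j r"
proof -
  define E :: mat where "E a b = (if a = j \<and> b = r then 1 else 0)" for a b
  have line: "(\<lambda>a b. if a = j \<and> b = r then W a b + t else W a b) = mat_line W t E" for t
    unfolding mat_line_def E_def by (intro ext) simp
  have "DL S k d W E = (\<Sum>a=1..k. \<Sum>i=1..d. E a i * L_grad S k d W a i)"
    by (rule DL_linear) (rule assms(2))
  also have "\<dots> = L_grad S k d W j r"
  proof -
    have "E a i * L_grad S k d W a i = (if i = r then (if a = j then L_grad S k d W j r else 0) else 0)"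
      for a i by (simp add: E_def)
    then show ?thesis using assms(3,4) by simp
  qed
  finally show ?thesis
    unfolding grad_L_def line using DERIV_imp_deriv[OF L_line_deriv[OF assms(1)]] by simp
qed

lemma DL_gradient:
  assumes "k \<ge> 1" "\<And>x y. (x, y) \<in> set S \<Longrightarrow> y \<in> {1..k}"
  shows "DL S k d W U = (\<Sum>j=1..k. \<Sum>i=1..d. U j i * grad_L S k d W j i)"
proof -
  have "L_grad S k d W j i = grad_L S k d W j i" if "j \<in> {1..k}" "i \<in> {1..d}" for j i
    using grad_L_closed_form[of k S j i d W] assms that by simp
  moreover have "DL S k d W U = (\<Sum>j=1..k. \<Sum>i=1..d. U j i * L_grad S k d W j i)"
    by (rule DL_linear) (rule assms(2))
  ultimately show ?thesis by simp
qed

lemma col_inf_norm_ge: "j \<in> {1..k} \<Longrightarrow> \<bar>W j i\<bar> \<le> col_inf_norm k W i"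
  unfolding col_inf_norm_def by (rule Max_ge) auto

lemma col_inf_norm_nonneg: "k \<ge> 1 \<Longrightarrow> 0 \<le> col_inf_norm k W i"
  using col_inf_norm_ge[of 1 k W i] by simp

lemma pairing_col_bound:
  fixes G :: "nat \<Rightarrow> nat \<Rightarrow> real"
  shows "- (\<Sum>j=1..k. \<Sum>i=1..d. V j i * G j i) \<le> (\<Sum>i=1..d. col_inf_norm k V i * (\<Sum>j=1..k. \<bar>G j i\<bar>))"
proof -
  have "- (\<Sum>j=1..k. \<Sum>i=1..d. V j i * G j i) = (\<Sum>i=1..d. \<Sum>j=1..k. - (V j i * G j i))"
    by (simp add: sum_negf) (rule sum.swap)
  also have "\<dots> \<le> (\<Sum>i=1..d. \<Sum>j=1..k. col_inf_norm k V i * \<bar>G j i\<bar>)"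
  proof (intro sum_mono)
    fix i j assume "j \<in> {1..k}"
    then have "\<bar>V j i\<bar> * \<bar>G j i\<bar> \<le> col_inf_norm k V i * \<bar>G j i\<bar>"
      by (intro mult_right_mono col_inf_norm_ge) auto
    then show "- (V j i * G j i) \<le> col_inf_norm k V i * \<bar>G j i\<bar>"
      by (metis abs_ge_minus_self abs_mult order_trans)
  qed
  finally show ?thesis by (simp add: sum_distrib_left)
qed

(* A minimiser of L over the matrices supported on a column set I is
   stationary in its own direction, because the line through it stays in that subspace. *)
lemma subspace_minimizer_stationary:
  assumes "k \<ge> 1" and W_supp: "supported_on k d I W"
    and W_min: "\<And>V. supported_on k d I V \<Longrightarrow> L S k d W \<le> L S k d V"
  shows "DL S k d W W = 0"
proof -
  have "supported_on k d I (mat_line W s W)" for s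
    using W_supp by (auto simp: supported_on_def mat_line_def)
  then have "L S k d (mat_line W 0 W) \<le> L S k d (mat_line W s W)" for s
    using W_min by simp
  then show ?thesis
    using DERIV_local_min[OF L_line_deriv[OF assms(1), where S = S and d = d and W = W and U = W], of 1]
    by simp
qed

(* Gap bound: at a point stationary in its own direction, convexity and Hoelder give
   L(W) - L(Wstar) <= ||Wstar||_{inf,1} * g for every bound g on the gradient column norms. *)
lemma suboptimality_bound:
  assumes k: "k \<ge> 1" and labels: "\<And>x y. (x, y) \<in> set S \<Longrightarrow> y \<in> {1..k}"
    and stationary: "DL S k d W W = 0"
    and g_max: "\<And>i. i \<in> {1..d} \<Longrightarrow> grad_col_l1 S k d W i \<le> g"
  shows "L S k d W - L S k d Wstar \<le> norm_inf_1 k d Wstar * g"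
proof -
  have DL_lin: "DL S k d W V = (\<Sum>j=1..k. \<Sum>i=1..d. V j i * grad_L S k d W j i)" for V
    by (rule DL_gradient[OF k]) (rule labels)
  define U where "U = (\<lambda>a b. Wstar a b - W a b)"
  have DL_U: "DL S k d W U = DL S k d W Wstar"
    using stationary unfolding DL_lin by (simp add: U_def left_diff_distrib sum_subtractf)
  have "L S k d W - L S k d Wstar \<le> - DL S k d W Wstar"
    using L_tangent[OF k, of S d W U] DL_U by (simp add: U_def mat_line_def)
  also have "\<dots> \<le> (\<Sum>i=1..d. col_inf_norm k Wstar i * grad_col_l1 S k d W i)"
    unfolding DL_lin grad_col_l1_def by (rule pairing_col_bound)
  also have "\<dots> \<le> (\<Sum>i=1..d. col_inf_norm k Wstar i * g)"
    by (intro sum_mono mult_left_mono g_max col_inf_norm_nonneg[OF k])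
  also have "\<dots> = norm_inf_1 k d Wstar * g"
    by (simp add: norm_inf_1_def sum_distrib_right)
  finally show ?thesis .
qed

(* Progress bound: adding column r and reoptimising decreases L at least as much as
   the step of length g = ||grad_r L(W)||_1 along the signed gradient column, which by
   1-smoothness gains g^2/2. *)
lemma greedy_progress:
  assumes k: "k \<ge> 1"
    and data: "\<And>x y. (x, y) \<in> set S \<Longrightarrow> (\<forall>i\<in>{1..d}. \<bar>x i\<bar> \<le> 1) \<and> y \<in> {1..k}"
    and r: "r \<in> {1..d}" and W_supp: "supported_on k d I W"
    and V_min: "\<And>V'. supported_on k d (insert r I) V' \<Longrightarrow> L S k d V \<le> L S k d V'"
  shows "L S k d V \<le> L S k d W - (grad_col_l1 S k d W r)^2 / 2"
proof -
  define g where "g = grad_col_l1 S k d W r"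
  define U :: mat where "U a b = (if b = r then - sgn (grad_L S k d W a r) else 0)" for a b
  have g_nonneg: "0 \<le> g" unfolding g_def grad_col_l1_def by (simp add: sum_nonneg)
  have "DL S k d W U = (\<Sum>j=1..k. \<Sum>i=1..d. U j i * grad_L S k d W j i)"
    by (rule DL_gradient[OF k]) (use data in blast)
  also have "\<dots> = (\<Sum>j=1..k. - \<bar>grad_L S k d W j r\<bar>)"
  proof (rule sum.cong[OF refl])
    fix j
    have "U j i * grad_L S k d W j i = (if i = r then - \<bar>grad_L S k d W j r\<bar> else 0)" for i
      by (simp add: U_def abs_sgn)
    then show "(\<Sum>i=1..d. U j i * grad_L S k d W j i) = - \<bar>grad_L S k d W j r\<bar>"
      using r by simp
  qed
  finally have DL_U: "DL S k d W U = - g"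
    by (simp add: g_def grad_col_l1_def sum_negf)
  have U_bound: "\<bar>mat_vec d U x j\<bar> \<le> 1" if "(x, y) \<in> set S" for x y j
  proof -
    have "U j i * x i = (if i = r then - sgn (grad_L S k d W j r) * x r else 0)" for i
      by (simp add: U_def)
    then have "mat_vec d U x j = - sgn (grad_L S k d W j r) * x r"
      using r by (simp add: mat_vec_def)
    then show ?thesis
      using data[OF that] r by (simp add: abs_mult abs_sgn_eq mult_le_one)
  qed
  have "supported_on k d (insert r I) (mat_line W g U)"
    using W_supp by (auto simp: supported_on_def mat_line_def U_def)
  then have "L S k d V \<le> L S k d (mat_line W g U)" by (rule V_min)
  also have "\<dots> \<le> L S k d W + g * DL S k d W U + 1^2 * g^2 / 2"
    using U_bound by (intro L_quadratic_upper[OF k g_nonneg]) auto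
  finally show ?thesis unfolding DL_U g_def[symmetric] by (simp add: power2_eq_square)
qed

lemma reciprocal_step:
  fixes x y c :: real
  assumes "0 < x" "0 < y" "0 < c" "y \<le> x - x^2 / c"
  shows "1 / x + 1 / c \<le> 1 / y"
proof -
  have expand: "(x - x^2 / c) * (1 / x + 1 / c) = 1 - (x / c)^2"
    using assms(1,3) by (simp add: field_simps power2_eq_square)
  have "y * (1 / x + 1 / c) \<le> (x - x^2 / c) * (1 / x + 1 / c)"
    using assms by (intro mult_right_mono) auto
  also have "\<dots> \<le> 1" unfolding expand by simp
  finally show ?thesis using assms(2) by (simp add: le_divide_eq mult.commute)
qed

lemma greedy_rate:
  fixes e g :: "nat \<Rightarrow> real"
  assumes gap: "\<And>t. t < T \<Longrightarrow> e t \<le> B * g t"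
    and progress: "\<And>t. t < T \<Longrightarrow> e (Suc t) \<le> e t - (g t)^2 / 2"
  shows "t \<le> T \<Longrightarrow> 0 < e t \<Longrightarrow> real t / (2 * B^2) \<le> 1 / e t"
proof (induction t)
  case 0
  then show ?case by simp
next
  case (Suc t)
  have "0 \<le> (g t)^2 / 2" by simp
  then have pos: "0 < e t" using Suc.prems progress[of t] by linarith
  have B2: "0 < B^2" using pos gap[of t] Suc.prems by auto
  have "(e t)^2 \<le> (B * g t)^2"
    using pos gap[of t] Suc.prems by (intro power_mono) auto
  then have "(e t)^2 / (2 * B^2) \<le> (B * g t)^2 / (2 * B^2)"
    using B2 by (intro divide_right_mono) auto
  also have "\<dots> = (g t)^2 / 2" using B2 by (simp add: power_mult_distrib)
  finally have decrease: "e (Suc t) \<le> e t - (e t)^2 / (2 * B^2)"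
    using progress[of t] Suc.prems by simp
  have "1 / e t + 1 / (2 * B^2) \<le> 1 / e (Suc t)"
    using reciprocal_step[OF pos Suc.prems(2) _ decrease] B2 by simp
  moreover have "real t / (2 * B^2) \<le> 1 / e t" using Suc pos by simp
  ultimately show ?case by (simp add: add_divide_distrib)
qed

(* Consequently T >= 4 B^2 / eps steps bring the gap below eps; the bound on the
   final gap handles the degenerate case B = 0. *)
lemma greedy_accuracy:
  fixes e g :: "nat \<Rightarrow> real"
  assumes "0 < \<epsilon>" and T_large: "4 / \<epsilon> * B^2 \<le> real T"
    and gap: "\<And>t. t < T \<Longrightarrow> e t \<le> B * g t"
    and progress: "\<And>t. t < T \<Longrightarrow> e (Suc t) \<le> e t - (g t)^2 / 2"
    and final_gap: "e T \<le> B * G"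
  shows "e T \<le> \<epsilon>"
proof (rule ccontr)
  assume "\<not> e T \<le> \<epsilon>"
  then have eT: "\<epsilon> < e T" "0 < e T" using assms(1) by auto
  have "B \<noteq> 0" using final_gap eT by auto
  then have B2: "0 < B^2" by simp
  have "2 / \<epsilon> = 4 / \<epsilon> * B^2 / (2 * B^2)" using B2 by simp
  also have "\<dots> \<le> real T / (2 * B^2)" using T_large B2 by (intro divide_right_mono) auto
  also have "\<dots> \<le> 1 / e T" by (rule greedy_rate[OF gap progress order_refl eT(2)])
  finally have "2 * e T \<le> \<epsilon>" using eT assms(1) by (simp add: field_simps)
  then show False using eT by simp
qed

lemma norm_inf_0_le_card:
  assumes "k \<ge> 1" "finite I" "supported_on k d I W"
  shows "norm_inf_0 k d W \<le> card I"
proof -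
  have "{i \<in> {1..d}. col_inf_norm k W i > 0} \<subseteq> I"
  proof (rule subsetI, rule ccontr)
    fix i assume i: "i \<in> {i \<in> {1..d}. col_inf_norm k W i > 0}" and "i \<notin> I"
    then have "(\<lambda>j. \<bar>W j i\<bar>) ` {1..k} = {0}"
      using assms(1,3) unfolding supported_on_def by force
    then show False using i by (simp add: col_inf_norm_def)
  qed
  then show ?thesis unfolding norm_inf_0_def by (rule card_mono[OF assms(2)])
qed

lemma run_supported:
  assumes "shareboost_run S k d T Ws Is rs" "t \<le> T"
  shows "supported_on k d (Is t) (Ws t)"
  using assms unfolding shareboost_run_def supported_on_def
  by (cases t) (auto simp: Suc_le_lessD)

lemma run_card:
  assumes "shareboost_run S k d T Ws Is rs"
  shows "t \<le> T \<Longrightarrow> finite (Is t) \<and> card (Is t) \<le> t"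
proof (induction t)
  case 0
  then show ?case using assms unfolding shareboost_run_def by auto
next
  case (Suc t)
  then have "Is (Suc t) = insert (rs t) (Is t)" using assms unfolding shareboost_run_def by auto
  then show ?case using Suc by (auto simp: card_insert_if)
qed

(* Every iterate is stationary in its own direction: the initial one is 0, the
   others are subspace minimisers. *)
lemma run_stationary:
  assumes "k \<ge> 1" "shareboost_run S k d T Ws Is rs" "t \<le> T"
  shows "DL S k d (Ws t) (Ws t) = 0"
proof (cases t)
  case 0
  then show ?thesis
    using assms(2) by (simp add: shareboost_run_def DL_def dloss_def softmax_mean_def score_gap_def
        mat_vec_def split_beta)
next
  case (Suc t')
  show ?thesis
  proof (rule subspace_minimizer_stationary[OF assms(1) run_supported[OF assms(2,3)]])
    show "L S k d (Ws t) \<le> L S k d V" if "supported_on k d (Is t) V" for V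
      using assms(2,3) that Suc unfolding shareboost_run_def by auto
  qed
qed

lemma run_progress:
  assumes "k \<ge> 1"
    and data: "\<And>x y. (x, y) \<in> set S \<Longrightarrow> (\<forall>i\<in>{1..d}. \<bar>x i\<bar> \<le> 1) \<and> y \<in> {1..k}"
    and run: "shareboost_run S k d T Ws Is rs" and "t < T"
  shows "L S k d (Ws (Suc t)) \<le> L S k d (Ws t) - (grad_col_l1 S k d (Ws t) (rs t))^2 / 2"
proof (rule greedy_progress[OF assms(1) data])
  show "rs t \<in> {1..d}" using run \<open>t < T\<close> unfolding shareboost_run_def by auto
  show "supported_on k d (Is t) (Ws t)" using run_supported[OF run] \<open>t < T\<close> by simp
  show "L S k d (Ws (Suc t)) \<le> L S k d V" if "supported_on k d (insert (rs t) (Is t)) V" for V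
    using run \<open>t < T\<close> that unfolding shareboost_run_def by auto
qed

theorem theorem2:
  fixes S :: "example list" and k d :: nat and \<epsilon> :: real and Wstar :: mat
    and Ws :: "nat \<Rightarrow> mat" and Is :: "nat \<Rightarrow> nat set" and rs :: "nat \<Rightarrow> nat" and T :: nat
  assumes "k \<ge> 1"
    and "\<forall>(x, y) \<in> set S. (\<forall>i\<in>{1..d}. \<bar>x i\<bar> \<le> 1) \<and> y \<in> {1..k}"
    and "\<epsilon> > 0"
    and "T = nat \<lceil>4 / \<epsilon> * (norm_inf_1 k d Wstar)\<^sup>2\<rceil>"
    and "shareboost_run S k d T Ws Is rs"
  shows "norm_inf_0 k d (Ws T) \<le> T \<and> L S k d (Ws T) \<le> L S k d Wstar + \<epsilon>"
proof
  note k = assms(1) and run = assms(5)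
  have data: "\<And>x y. (x, y) \<in> set S \<Longrightarrow> (\<forall>i\<in>{1..d}. \<bar>x i\<bar> \<le> 1) \<and> y \<in> {1..k}"
    using assms(2) by blast
  then have labels: "\<And>x y. (x, y) \<in> set S \<Longrightarrow> y \<in> {1..k}" by blast
  show "norm_inf_0 k d (Ws T) \<le> T"
    using norm_inf_0_le_card[OF k _ run_supported[OF run order_refl]] run_card[OF run order_refl]
    by (meson order_trans)
  define e where "e t = L S k d (Ws t) - L S k d Wstar" for t
  define g where "g t = grad_col_l1 S k d (Ws t) (rs t)" for t
  have gap: "e t \<le> norm_inf_1 k d Wstar * g t" if "t < T" for t
    unfolding e_def g_def using run that
    by (intro suboptimality_bound[OF k labels run_stationary[OF k run]]) (auto simp: shareboost_run_def)
  have progress: "e (Suc t) \<le> e t - (g t)^2 / 2" if "t < T" for t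
    unfolding e_def g_def using run_progress[OF k data run that] by simp
  have final_gap: "e T \<le> norm_inf_1 k d Wstar * (\<Sum>i=1..d. grad_col_l1 S k d (Ws T) i)"
    unfolding e_def using labels
    by (intro suboptimality_bound[OF k _ run_stationary[OF k run order_refl]] member_le_sum)
      (auto simp: grad_col_l1_def sum_nonneg)
  have "4 / \<epsilon> * (norm_inf_1 k d Wstar)^2 \<le> real T"
    unfolding assms(4) by (rule real_nat_ceiling_ge)
  from greedy_accuracy[OF assms(3) this gap progress final_gap]
  show "L S k d (Ws T) \<le> L S k d Wstar + \<epsilon>" unfolding e_def by simp
qed

end
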